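(* No strict two-stage algorithm for the hypergraph orientation problem has competitive ratio $o(\log n)$, even on instances consisting of a single hyperedge with $n$ vertices and uniform query costs. That is, there is a constant $c>0$ such that for every $n\ge 2$ there is an instance consisting of a single hyperedge on $n$ vertices with uniform query costs on which every strict two-stage algorithm $A$ satisfies $\mathbb E[A]\ge c\log n\cdot\mathbb E[\mathrm{OPT}]$.
   Context: An instance of the hypergraph orientation problem consists of a hypergraph $H=(V,E)$ and, for each vertex $v$, a query cost $c_v$ and a continuous distribution with minimal support interval $I_v$; weights $w_v$ are drawn independently and querying $v$ reveals $w_v$ at cost $c_v$. For a realization, $Q$ is a feasible query set if knowing $w_u$ for $u\in Q$ and only the intervals for unqueried vertices suffices to identify a minimum-weight vertex of every hyperedge; $\mathbb E[\mathrm{OPT}]$ is the expected minimum cost of a feasible query set; $\mathbb E[A]$ is the expected query cost of algorithm $A$. Uniform query costs means $c_v=1$. A strict two-stage algorithm first queries a fixed set $U_1\subseteq V$ (chosen non-adaptively), then queries a set $U_2$ chosen as a function of the revealed weights of $U_1$ (all at once, non-adaptively), and must guarantee that $U_1\cup U_2$ is a feasible query set for every realization. *)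

theory Defs
  imports "HOL-Probability.Probability"
begin

definition supp_dist :: "real measure \<Rightarrow> real set" where
  "supp_dist D = {x. \<forall>e>0. 0 < measure D {x - e <..< x + e}}"

definition supp_interval :: "real measure \<Rightarrow> real set" where
  "supp_interval D = {x. \<exists>a\<in>supp_dist D. \<exists>b\<in>supp_dist D. a \<le> x \<and> x \<le> b}"

definition feasible_query :: "nat set set \<Rightarrow> (nat \<Rightarrow> real set) \<Rightarrow> nat set \<Rightarrow> (nat \<Rightarrow> real) \<Rightarrow> bool" where
  "feasible_query Es I Q w \<longleftrightarrow>
     (\<forall>e\<in>Es. \<exists>u\<in>e. \<forall>w'. (\<forall>v\<in>e \<inter> Q. w' v = w v) \<and> (\<forall>v\<in>e - Q. w' v \<in> I v)
                          \<longrightarrow> (\<forall>v\<in>e. w' u \<le> w' v))"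

(* Minimum cost (uniform costs: cardinality) of a feasible query set. *)
definition opt_cost :: "nat set \<Rightarrow> nat set set \<Rightarrow> (nat \<Rightarrow> real set) \<Rightarrow> (nat \<Rightarrow> real) \<Rightarrow> nat" where
  "opt_cost V Es I w = Min {card Q | Q. Q \<subseteq> V \<and> feasible_query Es I Q w}"

(* A (deterministic) strict two-stage algorithm: a fixed first-stage set U1 and a second-stage
   rule f depending only on the revealed weights of U1 (w restricted to U1); U1 \<union> U2 must be
   feasible for every realization (weights in the supports). The second stage must be a
   measurable function of the realization so that the expected cost is defined. *)
definition strict_two_stage ::
  "nat set \<Rightarrow> nat set set \<Rightarrow> (nat \<Rightarrow> real measure) \<Rightarrow> nat set \<Rightarrow> ((nat \<Rightarrow> real) \<Rightarrow> nat set) \<Rightarrow> bool" where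
  "strict_two_stage V Es D U1 f \<longleftrightarrow>
     U1 \<subseteq> V \<and>
     (\<forall>w. f w \<subseteq> V) \<and>
     (\<lambda>w. f (restrict w U1)) \<in> measurable (PiM V D) (count_space UNIV) \<and>
     (\<forall>w \<in> PiE V (\<lambda>v. supp_dist (D v)).
        feasible_query Es (\<lambda>v. supp_interval (D v)) (U1 \<union> f (restrict w U1)) w)"

end

(*
  Vertex v is uniform on [v, v+1) with probability 1/2 and uniform on the common block
  [n+1, n+2) otherwise, so its minimal support interval is [v, n+2]. Querying the vertices
  in index order up to the first one that lands in its own block [v, v+1) certifies a minimum,
  hence E[OPT] <= 1 + sum_k 2^-k <= 2. A strict two-stage algorithm whose first stage has
  k vertices pays at least k; moreover, with probability 2^-k all of them land in the common
  block, and then no proper subset of the edge certifies a minimum, so it pays n. Finally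
  max(k, n 2^-k) >= (ln n)/2 for every k, so c = 1/4 works.
*)
theory Submission
  imports Defs
begin

lemma supp_interval_eq_atLeastAtMost:
  assumes "a \<in> supp_dist D" "b \<in> supp_dist D" "supp_dist D \<subseteq> {a..b}"
  shows "supp_interval D = {a..b}"
  using assms unfolding supp_interval_def by (auto 4 3)

lemma supp_dist_subset_atLeast:
  assumes "finite_measure D" "sets D = sets borel" "measure D {..<a} = 0"
  shows "supp_dist D \<subseteq> {a..}"
proof
  fix x assume x: "x \<in> supp_dist D"
  show "x \<in> {a..}"
  proof (rule ccontr)
    assume "x \<notin> {a..}"
    then have "0 < a - x" by simp
    then have "0 < measure D {x - (a - x)<..<x + (a - x)}"
      using x unfolding supp_dist_def by blast
    also have "\<dots> \<le> measure D {..<a}"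
      using assms(1,2) by (intro finite_measure.finite_measure_mono) auto
    finally show False using assms(3) by simp
  qed
qed

lemma supp_dist_subset_atMost:
  assumes "finite_measure D" "sets D = sets borel" "measure D {b<..} = 0"
  shows "supp_dist D \<subseteq> {..b}"
proof
  fix x assume x: "x \<in> supp_dist D"
  show "x \<in> {..b}"
  proof (rule ccontr)
    assume "x \<notin> {..b}"
    then have "0 < x - b" by simp
    then have "0 < measure D {x - (x - b)<..<x + (x - b)}"
      using x unfolding supp_dist_def by blast
    also have "\<dots> \<le> measure D {b<..}"
      using assms(1,2) by (intro finite_measure.finite_measure_mono) auto
    finally show False using assms(3) by simp
  qed
qed

lemma mem_supp_distI:
  assumes "finite_measure D" "sets D = sets borel" "a < b" "x \<in> {a..b}"
    and pos: "\<And>l r. a \<le> l \<Longrightarrow> l < r \<Longrightarrow> r \<le> b \<Longrightarrow> 0 < measure D {l<..<r}"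
  shows "x \<in> supp_dist D"
  unfolding supp_dist_def
proof (intro CollectI allI impI)
  fix e :: real assume "0 < e"
  then have "0 < measure D {max (x - e) a<..<min (x + e) b}"
    using assms(3,4) by (intro pos) auto
  also have "\<dots> \<le> measure D {x - e<..<x + e}"
    using assms(1,2) by (intro finite_measure.finite_measure_mono) auto
  finally show "0 < measure D {x - e<..<x + e}" .
qed

definition hard_dist :: "nat \<Rightarrow> nat \<Rightarrow> real measure" where
  "hard_dist n v = density lborel (\<lambda>x. ennreal (1/2) *
     (indicator {real v..<real v + 1} x + indicator {real n + 1..<real n + 2} x))"

lemma sets_hard_dist [simp, measurable_cong]: "sets (hard_dist n v) = sets borel"
  by (simp add: hard_dist_def)

lemma space_hard_dist [simp]: "space (hard_dist n v) = UNIV"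
  by (simp add: hard_dist_def)

lemma absolutely_continuous_hard_dist: "absolutely_continuous lborel (hard_dist n v)"
  unfolding hard_dist_def by (rule absolutely_continuousI_density) simp

lemma emeasure_hard_dist:
  assumes [measurable]: "X \<in> sets borel"
  shows "emeasure (hard_dist n v) X = ennreal (1/2) *
    (emeasure lborel ({real v..<real v + 1} \<inter> X) + emeasure lborel ({real n + 1..<real n + 2} \<inter> X))"
proof -
  have "emeasure (hard_dist n v) X = (\<integral>\<^sup>+ x. ennreal (1/2) *
      (indicator ({real v..<real v + 1} \<inter> X) x + indicator ({real n + 1..<real n + 2} \<inter> X) x) \<partial>lborel)"
    unfolding hard_dist_def
    by (subst emeasure_density) (auto intro!: nn_integral_cong simp: indicator_def)
  also have "\<dots> = ennreal (1/2) *
    (emeasure lborel ({real v..<real v + 1} \<inter> X) + emeasure lborel ({real n + 1..<real n + 2} \<inter> X))"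
    by (simp add: nn_integral_cmult nn_integral_add)
  finally show ?thesis .
qed

lemma prob_space_hard_dist: "prob_space (hard_dist n v)"
proof
  have "ennreal (1/2) * 2 = 1"
    using ennreal_mult'[of 2 "1/2"] by (simp add: mult.commute)
  then show "emeasure (hard_dist n v) (space (hard_dist n v)) = 1"
    by (simp add: emeasure_hard_dist one_add_one)
qed

interpretation hard_dist: prob_space "hard_dist n v" for n v
  by (rule prob_space_hard_dist)

lemma emeasure_hard_dist_high:
  "v < n \<Longrightarrow> emeasure (hard_dist n v) {real n + 1..<real n + 2} = ennreal (1/2)"
  by (simp add: emeasure_hard_dist)

lemma emeasure_hard_dist_above:
  "v < n \<Longrightarrow> emeasure (hard_dist n v) {real v + 1..} = ennreal (1/2)"
proof -
  assume "v < n"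
  then have "{real v..<real v + 1} \<inter> {real v + 1..} = {}"
    "{real n + 1..<real n + 2} \<inter> {real v + 1..} = {real n + 1..<real n + 2}" by auto
  then show ?thesis by (simp add: emeasure_hard_dist)
qed

lemma measure_hard_dist_pos:
  assumes "l < r" "{l<..<r} \<subseteq> {real v..<real v + 1} \<union> {real n + 1..<real n + 2}"
  shows "0 < measure (hard_dist n v) {l<..<r}"
proof -
  have "0 < ennreal (r - l)" using assms(1) by simp
  also have "\<dots> = emeasure lborel {l<..<r}" using assms(1) by simp
  also have "\<dots> \<le> emeasure lborel ({real v..<real v + 1} \<inter> {l<..<r}) +
                   emeasure lborel ({real n + 1..<real n + 2} \<inter> {l<..<r})"
    using assms(2) by (intro emeasure_subadditive[THEN order_trans[rotated]] emeasure_mono) auto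
  finally have "0 < emeasure (hard_dist n v) {l<..<r}"
    by (simp add: emeasure_hard_dist ennreal_zero_less_mult_iff ennreal_inverse_positive)
  then show ?thesis by (simp add: hard_dist.emeasure_eq_measure)
qed

lemma supp_interval_hard_dist:
  assumes "v < n"
  shows "supp_interval (hard_dist n v) = {real v..real n + 2}"
proof (rule supp_interval_eq_atLeastAtMost)
  have "{real v..<real v + 1} \<inter> {..<real v} = {}" "{real n + 1..<real n + 2} \<inter> {..<real v} = {}"
    "{real v..<real v + 1} \<inter> {real n + 2<..} = {}" "{real n + 1..<real n + 2} \<inter> {real n + 2<..} = {}"
    using assms by auto
  then have "measure (hard_dist n v) {..<real v} = 0" "measure (hard_dist n v) {real n + 2<..} = 0"
    by (simp_all add: measure_def emeasure_hard_dist)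
  then have "supp_dist (hard_dist n v) \<subseteq> {real v..} \<inter> {..real n + 2}"
    using supp_dist_subset_atLeast supp_dist_subset_atMost hard_dist.finite_measure_axioms
    by (metis Int_greatest sets_hard_dist)
  then show "supp_dist (hard_dist n v) \<subseteq> {real v..real n + 2}" by auto
  show "real v \<in> supp_dist (hard_dist n v)"
    by (rule mem_supp_distI[of _ "real v" "real v + 1"])
       (auto intro!: measure_hard_dist_pos hard_dist.finite_measure_axioms)
  show "real n + 2 \<in> supp_dist (hard_dist n v)"
    by (rule mem_supp_distI[of _ "real n + 1" "real n + 2"])
       (auto intro!: measure_hard_dist_pos hard_dist.finite_measure_axioms)
qed

lemma high_subset_supp_dist_hard_dist: "{real n + 1..real n + 2} \<subseteq> supp_dist (hard_dist n v)"
  by (auto intro!: mem_supp_distI[of _ "real n + 1" "real n + 2"] measure_hard_dist_pos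
      hard_dist.finite_measure_axioms)

lemma feasible_query_whole_edge:
  assumes "finite e" "e \<noteq> {}"
  shows "feasible_query {e} I e w"
proof -
  have "Min (w ` e) \<in> w ` e" using assms by (intro Min_in) auto
  then obtain u where "u \<in> e" "w u = Min (w ` e)" by auto
  then have "u \<in> e" "\<forall>v\<in>e. w u \<le> w v"
    using assms(1) by auto
  then show ?thesis unfolding feasible_query_def by auto
qed

lemma opt_cost_le:
  assumes "finite V" "Q \<subseteq> V" "feasible_query Es I Q w"
  shows "opt_cost V Es I w \<le> card Q"
  unfolding opt_cost_def using assms by (intro Min_le) auto

lemma opt_cost_attained:
  assumes "finite V" "Q \<subseteq> V" "feasible_query Es I Q w"
  obtains Q' where "Q' \<subseteq> V" "feasible_query Es I Q' w" "opt_cost V Es I w = card Q'"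
proof -
  have "opt_cost V Es I w \<in> {card Q |Q. Q \<subseteq> V \<and> feasible_query Es I Q w}"
    unfolding opt_cost_def using assms by (intro Min_in) auto
  then show ?thesis using that by blast
qed

lemma feasible_query_cong:
  assumes "\<And>e v. e \<in> Es \<Longrightarrow> v \<in> e \<Longrightarrow> I v = I' v"
  shows "feasible_query Es I Q w = feasible_query Es I' Q w"
  using assms unfolding feasible_query_def by (intro ball_cong bex_cong refl) blast+

lemma opt_cost_cong:
  assumes "\<And>e v. e \<in> Es \<Longrightarrow> v \<in> e \<Longrightarrow> I v = I' v"
  shows "opt_cost V Es I w = opt_cost V Es I' w"
  unfolding opt_cost_def using feasible_query_cong[OF assms] by simp

context
  fixes n :: nat
begin

lemma feasible_query_prefix:
  assumes "g < n" "w g < real g + 1"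
  shows "feasible_query {{0..<n}} (\<lambda>v. {real v..real n + 2}) {0..<Suc g} w"
proof -
  obtain u where u: "u < Suc g" "\<forall>v<Suc g. w u \<le> w v"
    using feasible_query_whole_edge[of "{0..<Suc g}" "\<lambda>_. UNIV" w]
    unfolding feasible_query_def by auto
  have "w u \<le> w' v"
    if "\<forall>v\<in>{0..<n} \<inter> {0..<Suc g}. w' v = w v"
       "\<forall>v\<in>{0..<n} - {0..<Suc g}. w' v \<in> {real v..real n + 2}" "v < n" for w' v
  proof (cases "v < Suc g")
    case True
    then show ?thesis using u that by auto
  next
    case False
    then have "real g + 1 \<le> real v" by simp
    moreover have "real v \<le> w' v" using False that by auto
    moreover have "w u \<le> w g" using u by auto
    ultimately show ?thesis using assms(2) by linarith
  qed
  then show ?thesis using u assms(1) unfolding feasible_query_def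
    by (intro ballI bexI[of _ u]) auto
qed

lemma high_feasible_query_eq_all:
  assumes "2 \<le> n" "Q \<subseteq> {0..<n}" "feasible_query {{0..<n}} (\<lambda>v. {real v..real n + 2}) Q w"
    and high: "\<forall>v\<in>Q. w v \<in> {real n + 1..<real n + 2}"
  shows "Q = {0..<n}"
proof (rule ccontr)
  assume "Q \<noteq> {0..<n}"
  with assms(2) obtain z where z: "z < n" "z \<notin> Q"
    by (metis atLeastLessThan_iff subsetI subset_antisym zero_le)
  from assms(3) obtain u where u: "u < n" and certified:
    "\<And>w'. (\<forall>v\<in>{0..<n} \<inter> Q. w' v = w v) \<and> (\<forall>v\<in>{0..<n} - Q. w' v \<in> {real v..real n + 2})
          \<Longrightarrow> (\<forall>v<n. w' u \<le> w' v)"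
    unfolding feasible_query_def by auto
  define w' where "w' v = (if v \<in> Q then w v else if v = u then real n + 2 else real v)" for v
  have below: "\<forall>v<n. w' u \<le> w' v"
    by (rule certified) (auto simp: w'_def)
  show False
  proof (cases "u \<in> Q")
    case True
    then have "real n + 1 \<le> w' u" using high by (simp add: w'_def)
    moreover have "w' z = real z" using z True by (auto simp: w'_def)
    ultimately show False using below z by force
  next
    case False
    define y :: nat where "y = (if u = 0 then 1 else 0)"
    have "y < n" "y \<noteq> u" using assms(1) by (auto simp: y_def)
    then have "w' y < real n + 2" using high by (auto simp: w'_def)
    moreover have "w' u = real n + 2" using False by (simp add: w'_def)
    ultimately show False using below \<open>y < n\<close> by force
  qed
qed

lemma one_le_opt_cost:
  assumes "2 \<le> n"
  shows "1 \<le> opt_cost {0..<n} {{0..<n}} (\<lambda>v. {real v..real n + 2}) w"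
proof -
  have all: "feasible_query {{0..<n}} (\<lambda>v. {real v..real n + 2}) {0..<n} w"
    using assms by (intro feasible_query_whole_edge) auto
  obtain Q where Q: "Q \<subseteq> {0..<n}" "feasible_query {{0..<n}} (\<lambda>v. {real v..real n + 2}) Q w"
    and opt: "opt_cost {0..<n} {{0..<n}} (\<lambda>v. {real v..real n + 2}) w = card Q"
    using opt_cost_attained[OF finite_atLeastLessThan order_refl all] by blast
  have "Q \<noteq> {}"
    using high_feasible_query_eq_all[OF assms Q] assms by auto
  then show ?thesis
    using opt Q(1) finite_subset by (fastforce simp: Suc_le_eq card_gt_0_iff)
qed

lemma opt_cost_le_prefix_count:
  assumes "0 < n"
  shows "opt_cost {0..<n} {{0..<n}} (\<lambda>v. {real v..real n + 2}) w
     \<le> 1 + card {k \<in> {1..<n}. \<forall>v<k. real v + 1 \<le> w v}"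
proof (cases "\<exists>g<n. w g < real g + 1")
  case True
  define g where "g = (LEAST g. g < n \<and> w g < real g + 1)"
  have g: "g < n" "w g < real g + 1"
    using LeastI_ex[OF True] unfolding g_def by auto
  have "\<forall>v<g. real v + 1 \<le> w v"
    using not_less_Least g(1) unfolding g_def by (metis less_trans not_le)
  then have "{1..g} \<subseteq> {k \<in> {1..<n}. \<forall>v<k. real v + 1 \<le> w v}"
    using g by auto
  then have "g \<le> card {k \<in> {1..<n}. \<forall>v<k. real v + 1 \<le> w v}"
    using card_mono[of _ "{1..g}"] by fastforce
  moreover have "opt_cost {0..<n} {{0..<n}} (\<lambda>v. {real v..real n + 2}) w \<le> card {0..<Suc g}"
    using g by (intro opt_cost_le feasible_query_prefix) auto
  ultimately show ?thesis by simp
next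
  case False
  then have "{k \<in> {1..<n}. \<forall>v<k. real v + 1 \<le> w v} = {1..<n}"
    by (auto simp: not_less) (metis less_trans not_le)
  moreover have "opt_cost {0..<n} {{0..<n}} (\<lambda>v. {real v..real n + 2}) w \<le> card {0..<n}"
    using assms by (intro opt_cost_le feasible_query_whole_edge) auto
  ultimately show ?thesis by simp
qed

end

lemma ln_half_le_or_le_scaled_power:
  fixes x :: real and k :: nat
  assumes "0 < x"
  shows "ln x / 2 \<le> k \<or> ln x / 2 \<le> x * (1/2)^k"
proof (cases "ln x / 2 \<le> real k")
  case False
  have "exp (-1) \<le> (1/2 :: real)"
    using exp_ge_add_one_self[of 1] by (simp add: exp_minus field_simps)
  have "ln x / 2 \<le> exp (ln x / 2)"
    using exp_ge_add_one_self[of "ln x / 2"] by linarith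
  also have "\<dots> = exp (ln x + - (ln x / 2))" by simp
  also have "\<dots> = x * exp (- (ln x / 2))" using assms by (simp only: exp_add exp_ln)
  also have "\<dots> \<le> x * exp (- real k)"
    using False assms by simp
  also have "\<dots> = x * exp (-1) ^ k"
    by (simp add: exp_of_nat_mult[symmetric])
  also have "\<dots> \<le> x * (1/2)^k"
    using \<open>exp (-1) \<le> 1/2\<close> assms by (intro mult_left_mono power_mono) auto
  finally show ?thesis by simp
qed simp

interpretation hard_product: product_prob_space "hard_dist n" I for n I
  by (simp add: product_prob_space_def product_prob_space_axioms_def product_sigma_finite_def
      prob_space_imp_sigma_finite prob_space_hard_dist)

abbreviation hard_product :: "nat \<Rightarrow> (nat \<Rightarrow> real) measure" where
  "hard_product n \<equiv> PiM {0..<n} (hard_dist n)"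

lemma sets_PiM_Collect_all:
  assumes "J \<subseteq> I" "finite J" "\<And>v. v \<in> J \<Longrightarrow> X v \<in> sets (M v)"
  shows "{w \<in> space (PiM I M). \<forall>v\<in>J. w v \<in> X v} \<in> sets (PiM I M)"
  using assms by (intro sets.sets_Collect_finite_All sets_Collect_single) auto

lemma emeasure_PiM_hard_dist_halves:
  assumes "J \<subseteq> I" "finite J" "\<And>v. v \<in> J \<Longrightarrow> X v \<in> sets borel"
    and "\<And>v. v \<in> J \<Longrightarrow> emeasure (hard_dist n v) (X v) = ennreal (1/2)"
  shows "emeasure (PiM I (hard_dist n)) {w \<in> space (PiM I (hard_dist n)). \<forall>v\<in>J. w v \<in> X v}
           = ennreal ((1/2)^card J)"
proof -
  have "emeasure (PiM I (hard_dist n)) {w \<in> space (PiM I (hard_dist n)). \<forall>v\<in>J. w v \<in> X v}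
          = (\<Prod>v\<in>J. emeasure (hard_dist n v) (X v))"
    using assms by (intro hard_product.emeasure_PiM_Collect) auto
  also have "\<dots> = (\<Prod>v\<in>J. ennreal (1/2))"
    using assms(4) by (intro prod.cong) auto
  also have "\<dots> = ennreal ((1/2)^card J)"
    using ennreal_power[of "1/2" "card J"] by simp
  finally show ?thesis .
qed

lemma one_le_nn_integral_opt_cost:
  assumes "2 \<le> n"
  shows "1 \<le> (\<integral>\<^sup>+ w. ennreal (real (opt_cost {0..<n} {{0..<n}} (\<lambda>v. {real v..real n + 2}) w)) \<partial>hard_product n)"
proof -
  have "(\<integral>\<^sup>+ w. 1 \<partial>hard_product n)
          \<le> (\<integral>\<^sup>+ w. ennreal (real (opt_cost {0..<n} {{0..<n}} (\<lambda>v. {real v..real n + 2}) w)) \<partial>hard_product n)"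
    using one_le_opt_cost[OF assms] by (intro nn_integral_mono) (simp add: ennreal_of_nat_eq_real_of_nat)
  then show ?thesis by (simp add: hard_product.emeasure_space_1)
qed

lemma sum_half_powers_le_one: "(\<Sum>k\<in>{1..<n}. (1/2::real)^k) \<le> 1"
proof -
  have "(\<Sum>k\<in>{1..<Suc m}. (1/2::real)^k) = 1 - (1/2)^m" for m
    by (induction m) (auto simp: field_simps)
  then show ?thesis by (cases n) auto
qed

lemma nn_integral_opt_cost_le_two:
  assumes "0 < n"
  shows "(\<integral>\<^sup>+ w. ennreal (real (opt_cost {0..<n} {{0..<n}} (\<lambda>v. {real v..real n + 2}) w)) \<partial>hard_product n) \<le> 2"
proof -
  \<comment> \<open>An optimal query set has more than k elements only on the event A k.\<close>
  define A where "A k = {w \<in> space (hard_product n). \<forall>v\<in>{..<k}. w v \<in> {real v + 1..}}" for k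
  have A_sets: "A k \<in> sets (hard_product n)" if "k \<le> n" for k
    unfolding A_def using that by (intro sets_PiM_Collect_all) auto
  have A_measure: "emeasure (hard_product n) (A k) = ennreal ((1/2)^k)" if "k \<le> n" for k
    unfolding A_def using that by (subst emeasure_PiM_hard_dist_halves) (auto simp: emeasure_hard_dist_above)
  have pointwise: "ennreal (real (opt_cost {0..<n} {{0..<n}} (\<lambda>v. {real v..real n + 2}) w))
      \<le> 1 + (\<Sum>k\<in>{1..<n}. indicator (A k) w)" if "w \<in> space (hard_product n)" for w
  proof -
    let ?S = "{k \<in> {1..<n}. \<forall>v<k. real v + 1 \<le> w v}"
    have "(\<Sum>k\<in>{1..<n}. indicator (A k) w :: ennreal) = (\<Sum>k\<in>{1..<n}. if k \<in> ?S then 1 else 0)"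
      using that by (intro sum.cong refl) (auto simp: A_def indicator_def)
    also have "\<dots> = of_nat (card ?S)"
      by (simp add: sum.inter_filter[symmetric])
    finally have "(\<Sum>k\<in>{1..<n}. indicator (A k) w :: ennreal) = of_nat (card ?S)" .
    moreover have "ennreal (real (opt_cost {0..<n} {{0..<n}} (\<lambda>v. {real v..real n + 2}) w))
        \<le> ennreal (real (1 + card ?S))"
      using opt_cost_le_prefix_count[OF assms, of w] by (intro ennreal_leI) simp
    ultimately show ?thesis
      by (simp add: ennreal_of_nat_eq_real_of_nat)
  qed
  have indicators: "(\<integral>\<^sup>+ w. (\<Sum>k\<in>{1..<n}. indicator (A k) w) \<partial>hard_product n)
      = ennreal (\<Sum>k\<in>{1..<n}. (1/2)^k)"
    using A_sets A_measure by (subst nn_integral_sum) auto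
  have "(\<integral>\<^sup>+ w. ennreal (real (opt_cost {0..<n} {{0..<n}} (\<lambda>v. {real v..real n + 2}) w)) \<partial>hard_product n)
      \<le> (\<integral>\<^sup>+ w. 1 + (\<Sum>k\<in>{1..<n}. indicator (A k) w) \<partial>hard_product n)"
    by (intro nn_integral_mono pointwise)
  also have "\<dots> = (\<integral>\<^sup>+ w. 1 \<partial>hard_product n) + (\<integral>\<^sup>+ w. (\<Sum>k\<in>{1..<n}. indicator (A k) w) \<partial>hard_product n)"
    using A_sets by (intro nn_integral_add) auto
  also have "\<dots> = 1 + ennreal (\<Sum>k\<in>{1..<n}. (1/2)^k)"
    using indicators by (simp add: hard_product.emeasure_space_1)
  also have "\<dots> \<le> 1 + 1"
    using sum_half_powers_le_one[of n] by (intro add_left_mono) (simp add: ennreal_le_1)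
  finally show ?thesis by (simp add: one_add_one)
qed

lemma feasible_query_supp_interval_hard_dist:
  "feasible_query {{0..<n}} (\<lambda>v. supp_interval (hard_dist n v)) Q w
     = feasible_query {{0..<n}} (\<lambda>v. {real v..real n + 2}) Q w"
  by (intro feasible_query_cong) (simp add: supp_interval_hard_dist)

lemma opt_cost_supp_interval_hard_dist:
  "opt_cost {0..<n} {{0..<n}} (\<lambda>v. supp_interval (hard_dist n v)) w
     = opt_cost {0..<n} {{0..<n}} (\<lambda>v. {real v..real n + 2}) w"
  by (intro opt_cost_cong) (simp add: supp_interval_hard_dist)

lemma strict_two_stage_high_queries_all:
  assumes "2 \<le> n" and two_stage: "strict_two_stage {0..<n} {{0..<n}} (hard_dist n) U1 f"
    and high: "\<forall>v\<in>U1. w v \<in> {real n + 1..<real n + 2}"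
  shows "U1 \<union> f (restrict w U1) = {0..<n}"
proof -
  have U1: "U1 \<subseteq> {0..<n}" and f: "\<And>w. f w \<subseteq> {0..<n}"
    and feasible: "\<And>w. w \<in> PiE {0..<n} (\<lambda>v. supp_dist (hard_dist n v)) \<Longrightarrow>
        feasible_query {{0..<n}} (\<lambda>v. supp_interval (hard_dist n v)) (U1 \<union> f (restrict w U1)) w"
    using two_stage unfolding strict_two_stage_def by auto
  define w' where "w' v = (if v < n then if v \<in> U1 then w v else real n + 1 else undefined)" for v
  have w': "w' \<in> PiE {0..<n} (\<lambda>v. supp_dist (hard_dist n v))"
    using high high_subset_supp_dist_hard_dist by (fastforce simp: w'_def PiE_iff extensional_def)
  have "restrict w' U1 = restrict w U1"
    using U1 by (auto simp: w'_def restrict_def fun_eq_iff)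
  then have "feasible_query {{0..<n}} (\<lambda>v. {real v..real n + 2}) (U1 \<union> f (restrict w U1)) w'"
    using feasible[OF w'] by (simp add: feasible_query_supp_interval_hard_dist)
  moreover have "\<forall>v\<in>U1 \<union> f (restrict w U1). w' v \<in> {real n + 1..<real n + 2}"
    using high U1 f by (fastforce simp: w'_def)
  ultimately show ?thesis
    using high_feasible_query_eq_all[OF assms(1)] U1 f by blast
qed

lemma nn_integral_two_stage_cost_ge_ln:
  assumes "2 \<le> n" and two_stage: "strict_two_stage {0..<n} {{0..<n}} (hard_dist n) U1 f"
  shows "ennreal (ln (real n) / 2)
           \<le> (\<integral>\<^sup>+ w. ennreal (real (card (U1 \<union> f (restrict w U1)))) \<partial>hard_product n)"
proof -
  have U1: "U1 \<subseteq> {0..<n}" and f: "\<And>w. f w \<subseteq> {0..<n}"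
    using two_stage unfolding strict_two_stage_def by auto
  then have "finite U1" using finite_subset by blast
  define B where "B = {w \<in> space (hard_product n). \<forall>v\<in>U1. w v \<in> {real n + 1..<real n + 2}}"
  have B_sets: "B \<in> sets (hard_product n)"
    unfolding B_def using U1 \<open>finite U1\<close> by (intro sets_PiM_Collect_all) auto
  have B_measure: "emeasure (hard_product n) B = ennreal ((1/2)^card U1)"
    unfolding B_def using U1 \<open>finite U1\<close>
    by (intro emeasure_PiM_hard_dist_halves) (auto simp: emeasure_hard_dist_high)
  have "(\<integral>\<^sup>+ w. ennreal (real (card U1)) \<partial>hard_product n)
          \<le> (\<integral>\<^sup>+ w. ennreal (real (card (U1 \<union> f (restrict w U1)))) \<partial>hard_product n)"
    using U1 f by (intro nn_integral_mono ennreal_leI of_nat_mono card_mono) (auto intro: finite_subset)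
  then have first_stage: "ennreal (real (card U1))
          \<le> (\<integral>\<^sup>+ w. ennreal (real (card (U1 \<union> f (restrict w U1)))) \<partial>hard_product n)"
    by (simp add: hard_product.emeasure_space_1)
  have "(\<integral>\<^sup>+ w. ennreal (real n) * indicator B w \<partial>hard_product n)
          \<le> (\<integral>\<^sup>+ w. ennreal (real (card (U1 \<union> f (restrict w U1)))) \<partial>hard_product n)"
    using strict_two_stage_high_queries_all[OF assms] by (intro nn_integral_mono) (auto simp: B_def indicator_def)
  then have all_high: "ennreal (real n * (1/2)^card U1)
          \<le> (\<integral>\<^sup>+ w. ennreal (real (card (U1 \<union> f (restrict w U1)))) \<partial>hard_product n)"
    using B_sets B_measure by (simp add: nn_integral_cmult_indicator ennreal_mult)
  from ln_half_le_or_le_scaled_power[of "real n" "card U1"] assms(1) show ?thesis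
    using first_stage all_high by (auto intro: order_trans[OF ennreal_leI])
qed

lemma quarter_ln_times_opt_cost_le_two_stage_cost:
  assumes "2 \<le> n" and two_stage: "strict_two_stage {0..<n} {{0..<n}} (hard_dist n) U1 f"
  shows "ennreal (1/4 * ln (real n))
      * (\<integral>\<^sup>+ w. ennreal (real (opt_cost {0..<n} {{0..<n}} (\<lambda>v. supp_interval (hard_dist n v)) w)) \<partial>hard_product n)
    \<le> (\<integral>\<^sup>+ w. ennreal (real (card (U1 \<union> f (restrict w U1)))) \<partial>hard_product n)"
proof -
  have "ennreal (1/4 * ln (real n))
      * (\<integral>\<^sup>+ w. ennreal (real (opt_cost {0..<n} {{0..<n}} (\<lambda>v. supp_interval (hard_dist n v)) w)) \<partial>hard_product n)
    \<le> ennreal (1/4 * ln (real n)) * 2"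
    using nn_integral_opt_cost_le_two[of n] assms(1)
    by (intro mult_left_mono) (simp_all add: opt_cost_supp_interval_hard_dist)
  also have "\<dots> = ennreal (ln (real n) / 2)"
    using ennreal_mult'[of 2 "1/4 * ln (real n)"] assms(1) by (simp add: mult.commute)
  also have "\<dots> \<le> (\<integral>\<^sup>+ w. ennreal (real (card (U1 \<union> f (restrict w U1)))) \<partial>hard_product n)"
    using assms by (rule nn_integral_two_stage_cost_ge_ln)
  finally show ?thesis .
qed

theorem theoremA2:
  shows "\<exists>c::real. c > 0 \<and>
    (\<forall>n::nat. n \<ge> 2 \<longrightarrow>
      (\<exists>D :: nat \<Rightarrow> real measure.
         (\<forall>v<n. prob_space (D v) \<and> sets (D v) = sets borel \<and> absolutely_continuous lborel (D v)) \<and>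
         (let V = {0..<n}; Es = {V}; I = (\<lambda>v. supp_interval (D v)); P = PiM V D;
              EOPT = (\<integral>\<^sup>+ w. ennreal (real (opt_cost V Es I w)) \<partial>P)
          in 0 < EOPT \<and>
             (\<forall>U1 f. strict_two_stage V Es D U1 f \<longrightarrow>
                (\<integral>\<^sup>+ w. ennreal (real (card (U1 \<union> f (restrict w U1)))) \<partial>P)
                  \<ge> ennreal (c * ln (real n)) * EOPT))))"
  unfolding Let_def
  apply (intro exI[of _ "1/4"] conjI allI impI)
   apply simp
  subgoal for n
    using one_le_nn_integral_opt_cost[of n]
    by (intro exI[of _ "hard_dist n"] conjI allI impI prob_space_hard_dist sets_hard_dist
        absolutely_continuous_hard_dist less_le_trans[OF zero_less_one]
        quarter_ln_times_opt_cost_le_two_stage_cost)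
      (simp_all add: opt_cost_supp_interval_hard_dist)
  done

end
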